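(* Let $U$ be a unicyclic graph with an edge $\ell u\in E(U)$ such that $\deg(\ell)=1$ and $u\notin V(\operatorname{Cycles}(U))$. (i) If $v\in V(\operatorname{Cycles}(U))$, then there exists a u-switch $\tau$ over $U$ such that $\ell v\in E(\tau(U))$. (ii) If $v\notin V(\operatorname{Cycles}(U))$, $v\neq u$ and $\deg(v)\ge2$, then there exists a u-switch $\tau$ over $U$ such that $\ell v\in E(\tau(U))$.
   Context: Graphs are finite, simple, undirected, labeled. A unicyclic graph is a connected graph with exactly one cycle. For vertices $a,b,c,d$, $A=\binom{a\ b}{c\ d}$ is interchangeable in $G$ if $ab,cd\in E(G)$, $\{a,b\}\cap\{c,d\}=\varnothing$, $ac,bd\notin E(G)$; the 2-switch $\tau_A$ sends $G$ to $G-ab-cd+ac+bd$ if $A$ is interchangeable and to $G$ otherwise (trivial). A nontrivial 2-switch $\tau$ over a unicyclic $U$ is a u-switch if $\tau(U)$ is unicyclic. $\operatorname{Cycles}(G)$ is the subgraph induced by vertices lying on some cycle of $G$. *)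

theory Defs
  imports Main
begin

definition simple_graph :: "'a set \<Rightarrow> 'a set set \<Rightarrow> bool" where
  "simple_graph V E \<longleftrightarrow> finite V \<and>
     (\<forall>e\<in>E. \<exists>x y. x \<noteq> y \<and> x \<in> V \<and> y \<in> V \<and> e = {x, y})"

definition adj :: "'a set set \<Rightarrow> 'a \<Rightarrow> 'a \<Rightarrow> bool" where
  "adj E x y \<longleftrightarrow> {x, y} \<in> E"

definition degree :: "'a set \<Rightarrow> 'a set set \<Rightarrow> 'a \<Rightarrow> nat" where
  "degree V E v = card {w \<in> V. {v, w} \<in> E}"

definition connected_graph :: "'a set \<Rightarrow> 'a set set \<Rightarrow> bool" where
  "connected_graph V E \<longleftrightarrow> V \<noteq> {} \<and> (\<forall>x\<in>V. \<forall>y\<in>V. (adj E)\<^sup>*\<^sup>* x y)"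

text \<open>A cycle is given by a cyclic list of at least 3 distinct vertices, consecutive ones
  (cyclically) adjacent; as a subgraph it is determined by its edge set.\<close>

definition is_cycle_list :: "'a set set \<Rightarrow> 'a list \<Rightarrow> bool" where
  "is_cycle_list E xs \<longleftrightarrow> length xs \<ge> 3 \<and> distinct xs \<and>
     (\<forall>i < length xs. {xs ! i, xs ! ((i + 1) mod length xs)} \<in> E)"

definition cycle_edges :: "'a list \<Rightarrow> 'a set set" where
  "cycle_edges xs = {{xs ! i, xs ! ((i + 1) mod length xs)} | i. i < length xs}"

definition graph_cycles :: "'a set set \<Rightarrow> 'a set set set" where
  "graph_cycles E = {cycle_edges xs | xs. is_cycle_list E xs}"

definition unicyclic :: "'a set \<Rightarrow> 'a set set \<Rightarrow> bool" where
  "unicyclic V E \<longleftrightarrow> simple_graph V E \<and> connected_graph V E \<and> (\<exists>!C. C \<in> graph_cycles E)"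

definition cycle_vertices :: "'a set set \<Rightarrow> 'a set" where
  "cycle_vertices E = {v. \<exists>xs. is_cycle_list E xs \<and> v \<in> set xs}"

definition interchangeable :: "'a set set \<Rightarrow> 'a \<Rightarrow> 'a \<Rightarrow> 'a \<Rightarrow> 'a \<Rightarrow> bool" where
  "interchangeable E a b c d \<longleftrightarrow> {a, b} \<in> E \<and> {c, d} \<in> E \<and> {a, b} \<inter> {c, d} = {} \<and>
     {a, c} \<notin> E \<and> {b, d} \<notin> E"

definition two_switch :: "'a set set \<Rightarrow> 'a \<Rightarrow> 'a \<Rightarrow> 'a \<Rightarrow> 'a \<Rightarrow> 'a set set" where
  "two_switch E a b c d =
     (if interchangeable E a b c d then (E - {{a, b}, {c, d}}) \<union> {{a, c}, {b, d}} else E)"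

definition u_switch :: "'a set \<Rightarrow> 'a set set \<Rightarrow> 'a \<Rightarrow> 'a \<Rightarrow> 'a \<Rightarrow> 'a \<Rightarrow> bool" where
  "u_switch V E a b c d \<longleftrightarrow> interchangeable E a b c d \<and> unicyclic V (two_switch E a b c d)"

end

(*
  The switch replaces l u and v w by l v and u w for a suitable neighbour w of v, so that l
  becomes a pendant vertex at v; as l is a leaf, connectivity only needs a walk from v to u
  afterwards. If v lies on the cycle, w is a cycle neighbour not adjacent to u: the old cycle
  is broken and every new cycle passes through u w, so there is exactly one. If v is off the
  cycle, w is chosen so that v w is a bridge not separating v from u: the old cycle survives
  and u w lies on no cycle.
*)

theory Submission
  imports Defs "HOL-Library.Transitive_Closure_Table"
begin

section \<open>Reachability\<close>

abbreviation reachable :: "'a set set \<Rightarrow> 'a \<Rightarrow> 'a \<Rightarrow> bool" where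
  "reachable E \<equiv> (adj E)\<^sup>*\<^sup>*"

lemma symp_adj: "symp (adj E)"
  by (auto intro: sympI simp: adj_def insert_commute)

lemma reachable_sym: "reachable E x y \<Longrightarrow> reachable E y x"
  by (rule sympD[OF symp_rtranclp[OF symp_adj]])

lemma reachable_doubleton: "reachable E x y \<Longrightarrow> {p, q} = {x, y} \<Longrightarrow> reachable E p q"
  by (metis doubleton_eq_iff reachable_sym)

lemma reachable_edge: "{x, y} \<in> E \<Longrightarrow> reachable E x y"
  by (simp add: adj_def r_into_rtranclp)

lemma reachable_mono:
  assumes "reachable E x y" and "E \<subseteq> F"
  shows "reachable F x y"
proof -
  have "adj E \<le> adj F" using assms(2) by (auto simp: adj_def)
  then show ?thesis using assms(1) by (metis rtranclp_mono predicate2D)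
qed

lemma rtranclp_map:
  assumes "\<And>p q. R p q \<Longrightarrow> S\<^sup>*\<^sup>* (f p) (f q)" and "R\<^sup>*\<^sup>* a b"
  shows "S\<^sup>*\<^sup>* (f a) (f b)"
  using assms(2)
proof (induction rule: rtranclp_induct)
  case base then show ?case by simp
next
  case (step y z) then show ?case using assms(1) by (meson rtranclp_trans)
qed

lemma reachable_if_edges_reachable:
  assumes "\<And>x y. {x, y} \<in> E \<Longrightarrow> reachable F x y" and "reachable E a b"
  shows "reachable F a b"
  using rtranclp_map[where f = id, OF _ assms(2)] assms(1) by (simp add: adj_def)

lemma connected_graph_if_edges_reachable:
  assumes "connected_graph V E" and "\<And>x y. {x, y} \<in> E \<Longrightarrow> reachable F x y"
  shows "connected_graph V F"
  using assms reachable_if_edges_reachable by (metis connected_graph_def)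

lemma reachable_delete_non_bridge:
  assumes "reachable F a b" and "reachable (F - {{x, y}}) x y"
  shows "reachable (F - {{x, y}}) a b"
proof (rule reachable_if_edges_reachable[OF _ assms(1)])
  fix p q assume "{p, q} \<in> F"
  show "reachable (F - {{x, y}}) p q"
  proof (cases "{p, q} = {x, y}")
    case True with assms(2) show ?thesis by (rule reachable_doubleton)
  next
    case False with \<open>{p, q} \<in> F\<close> show ?thesis by (simp add: reachable_edge)
  qed
qed

text \<open>Collapsing l onto u maps every walk to a walk avoiding the edge l u.\<close>

lemma reachable_delete_pendant_edge:
  assumes pendant: "\<forall>x. {l, x} \<in> F \<longrightarrow> x = u"
    and "reachable F p q" and "p \<noteq> l" and "q \<noteq> l"
  shows "reachable (F - {{l, u}}) p q"
proof -
  define f where "f x = (if x = l then u else x)" for x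
  have "reachable (F - {{l, u}}) (f x) (f y)" if "adj F x y" for x y
  proof (cases "{x, y} = {l, u}")
    case True
    then have "f x = f y" by (auto simp: f_def doubleton_eq_iff)
    then show ?thesis by simp
  next
    case False
    moreover have "{x, y} \<in> F" using that by (simp add: adj_def)
    moreover from this have "x \<noteq> l" "y \<noteq> l"
      using False pendant by (metis insert_commute)+
    ultimately show ?thesis by (simp add: f_def reachable_edge)
  qed
  from rtranclp_map[where f = f, OF this assms(2)] show ?thesis
    using assms(3,4) by (simp add: f_def)
qed

lemma rtrancl_path_avoids_edge:
  assumes "rtrancl_path (adj F) x ps y" and "v \<notin> set ps"
    and "x = v \<Longrightarrow> ps \<noteq> [] \<Longrightarrow> hd ps \<noteq> w"
  shows "reachable (F - {{v, w}}) x y"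
  using assms
proof (induction rule: rtrancl_path.induct)
  case (base x) then show ?case by simp
next
  case (step x y ys z)
  have "reachable (F - {{v, w}}) y z" using step.prems by (intro step.IH) auto
  moreover have "{x, y} \<noteq> {v, w}" using step.prems by (auto simp: doubleton_eq_iff)
  then have "adj (F - {{v, w}}) x y" using step.hyps(1) by (simp add: adj_def)
  ultimately show ?case by (meson converse_rtranclp_into_rtranclp)
qed

text \<open>The first edge of a simple walk from v to u misses one of two distinct edges at v.\<close>

lemma reachable_delete_one_of_two_edges:
  assumes "reachable F v u" and "v \<noteq> u" and "w\<^sub>1 \<noteq> w\<^sub>2"
    and "{v, w\<^sub>1} \<in> F" and "{v, w\<^sub>2} \<in> F"
  shows "\<exists>w. {v, w} \<in> F \<and> reachable (F - {{v, w}}) v u"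
proof -
  obtain ps where "rtrancl_path (adj F) v ps u"
    using assms(1) rtranclp_eq_rtrancl_path by metis
  then obtain ps' where path: "rtrancl_path (adj F) v ps' u" and "distinct (v # ps')"
    using rtrancl_path_distinct by metis
  then have "v \<notin> set ps'" by simp
  obtain w where "w \<in> {w\<^sub>1, w\<^sub>2}" and "ps' \<noteq> [] \<Longrightarrow> hd ps' \<noteq> w"
    using assms(3) by blast
  then show ?thesis
    using rtrancl_path_avoids_edge[OF path \<open>v \<notin> set ps'\<close>] assms(4,5) by blast
qed

section \<open>Cycles\<close>

lemma cycle_edges_subset: "is_cycle_list F xs \<Longrightarrow> cycle_edges xs \<subseteq> F"
  by (auto simp: is_cycle_list_def cycle_edges_def)

lemma is_cycle_list_mono: "is_cycle_list F xs \<Longrightarrow> cycle_edges xs \<subseteq> G \<Longrightarrow> is_cycle_list G xs"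
  by (auto simp: is_cycle_list_def cycle_edges_def)

lemma cycle_edge_vertex:
  assumes "g \<in> cycle_edges xs" and "x \<in> g"
  shows "x \<in> set xs"
proof -
  obtain i where i: "i < length xs" "g = {xs ! i, xs ! ((i + 1) mod length xs)}"
    using assms(1) by (auto simp: cycle_edges_def)
  then have "(i + 1) mod length xs < length xs" by (intro mod_less_divisor) auto
  then show ?thesis using i assms(2) by auto
qed

lemma cycle_edge_doubleton:
  assumes "is_cycle_list F xs" and "g \<in> cycle_edges xs"
  obtains p q where "g = {p, q}" and "p \<noteq> q"
proof -
  let ?n = "length xs"
  obtain i where i: "i < ?n" and g: "g = {xs ! i, xs ! ((i + 1) mod ?n)}"
    using assms(2) by (auto simp: cycle_edges_def)
  have "?n \<ge> 3" and "distinct xs" using assms(1) by (auto simp: is_cycle_list_def)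
  moreover have "(i + 1) mod ?n \<noteq> i" and "(i + 1) mod ?n < ?n"
    using \<open>?n \<ge> 3\<close> i by (auto simp: mod_if)
  ultimately have "xs ! i \<noteq> xs ! ((i + 1) mod ?n)"
    using i by (simp add: nth_eq_iff_index_eq)
  with g that show ?thesis by blast
qed

lemma cycle_vertex_two_neighbours:
  assumes "is_cycle_list F xs" and "p \<in> set xs"
  shows "\<exists>a b. a \<noteq> b \<and> {p, a} \<in> cycle_edges xs \<and> {p, b} \<in> cycle_edges xs"
proof -
  let ?n = "length xs"
  have n: "?n \<ge> 3" and dist: "distinct xs" using assms(1) by (auto simp: is_cycle_list_def)
  obtain k where k: "k < ?n" "xs ! k = p" using assms(2) by (metis in_set_conv_nth)
  define j where "j = (if k = 0 then ?n - 1 else k - 1)"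
  have j: "j < ?n" "(j + 1) mod ?n = k" using n k by (auto simp: j_def mod_Suc)
  have "{p, xs ! ((k + 1) mod ?n)} \<in> cycle_edges xs"
    unfolding cycle_edges_def using k by blast
  moreover have "{p, xs ! j} \<in> cycle_edges xs"
    unfolding cycle_edges_def using j k by (metis (mono_tags, lifting) insert_commute mem_Collect_eq)
  moreover have "(k + 1) mod ?n \<noteq> j" and "(k + 1) mod ?n < ?n"
    using n k by (auto simp: j_def mod_Suc)
  then have "xs ! ((k + 1) mod ?n) \<noteq> xs ! j"
    using dist j by (simp add: nth_eq_iff_index_eq)
  ultimately show ?thesis by blast
qed

lemma pendant_not_on_cycle:
  assumes "\<forall>x. {l, x} \<in> F \<longrightarrow> x = u" and "is_cycle_list F xs"
  shows "l \<notin> set xs"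
  using cycle_vertex_two_neighbours[OF assms(2)] cycle_edges_subset[OF assms(2)] assms(1) by blast

lemma cycle_edge_index_inj:
  assumes "is_cycle_list F xs" and "i < length xs" and "k < length xs"
    and "{xs ! i, xs ! ((i + 1) mod length xs)} = {xs ! k, xs ! ((k + 1) mod length xs)}"
  shows "i = k"
proof -
  let ?n = "length xs"
  have n: "?n \<ge> 3" and dist: "distinct xs" using assms(1) by (auto simp: is_cycle_list_def)
  have succ: "(i + 1) mod ?n < ?n" "(k + 1) mod ?n < ?n"
    using assms(2) by (auto intro: mod_less_divisor)
  from assms(4) consider "xs ! i = xs ! k"
    | "xs ! i = xs ! ((k + 1) mod ?n) \<and> xs ! ((i + 1) mod ?n) = xs ! k"
    by (metis doubleton_eq_iff)
  then show ?thesis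
  proof cases
    case 1 then show ?thesis using dist assms(2,3) by (simp add: nth_eq_iff_index_eq)
  next
    case 2
    then have "i = (k + 1) mod ?n" "(i + 1) mod ?n = k"
      using dist assms(2,3) succ by (metis nth_eq_iff_index_eq)+
    then show ?thesis using n assms(2,3) by (auto simp: mod_Suc split: if_splits)
  qed
qed

lemma add_Suc_mod_neq:
  assumes "i < (n::nat)" and "Suc t < n"
  shows "(i + 1 + t) mod n \<noteq> i"
proof (cases "i + 1 + t < n")
  case True then show ?thesis by simp
next
  case False
  then have "(i + 1 + t) mod n = i + 1 + t - n" using assms by (simp add: le_mod_geq)
  then show ?thesis using assms False by simp
qed

text \<open>Walking once around the cycle from the far end of the deleted edge.\<close>

lemma cycle_edge_reachable:
  assumes cyc: "is_cycle_list F xs" and "{p, q} \<in> cycle_edges xs"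
  shows "reachable (cycle_edges xs - {{p, q}}) p q"
proof -
  let ?n = "length xs"
  obtain i where i: "i < ?n" and pq: "{p, q} = {xs ! i, xs ! ((i + 1) mod ?n)}"
    using assms(2) by (auto simp: cycle_edges_def)
  let ?D = "cycle_edges xs - {{p, q}}"
  have n: "?n \<ge> 3" using cyc by (auto simp: is_cycle_list_def)
  have walk: "reachable ?D (xs ! ((i + 1) mod ?n)) (xs ! ((i + 1 + t) mod ?n))" if "t < ?n" for t
    using that
  proof (induction t)
    case 0 then show ?case by simp
  next
    case (Suc t)
    define k where "k = (i + 1 + t) mod ?n"
    have k: "k < ?n" using i unfolding k_def by (intro mod_less_divisor) auto
    have "k \<noteq> i"
      unfolding k_def using add_Suc_mod_neq[OF i Suc.prems] by simp
    then have "{xs ! k, xs ! ((k + 1) mod ?n)} \<noteq> {p, q}"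
      using cycle_edge_index_inj[OF cyc k i] pq by blast
    moreover have "{xs ! k, xs ! ((k + 1) mod ?n)} \<in> cycle_edges xs"
      unfolding cycle_edges_def using k by blast
    ultimately have "adj ?D (xs ! k) (xs ! ((k + 1) mod ?n))" by (simp add: adj_def)
    moreover have "(k + 1) mod ?n = (i + 1 + Suc t) mod ?n" by (simp add: k_def mod_Suc_eq)
    ultimately have "adj ?D (xs ! ((i + 1 + t) mod ?n)) (xs ! ((i + 1 + Suc t) mod ?n))"
      by (simp add: k_def)
    moreover have "reachable ?D (xs ! ((i + 1) mod ?n)) (xs ! ((i + 1 + t) mod ?n))"
      using Suc by simp
    ultimately show ?case by (simp add: rtranclp.rtrancl_into_rtrancl)
  qed
  have "i + 1 + (?n - 1) = i + ?n" using n by simp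
  then have "(i + 1 + (?n - 1)) mod ?n = i" using i by simp
  then have "reachable ?D (xs ! ((i + 1) mod ?n)) (xs ! i)" using walk[of "?n - 1"] n by simp
  then show ?thesis by (rule reachable_doubleton) (simp add: pq insert_commute)
qed

lemma rtrancl_path_nth:
  "rtrancl_path r x xs y \<Longrightarrow> (\<forall>i < length xs. r ((x # xs) ! i) (xs ! i)) \<and> last (x # xs) = y"
proof (induction rule: rtrancl_path.induct)
  case (base x) then show ?case by simp
next
  case (step x y ys z)
  have "r ((x # y # ys) ! i) ((y # ys) ! i)" if "i < length (y # ys)" for i
    using step that by (cases i) auto
  then show ?case using step by simp
qed

lemma cycle_through_edge:
  assumes e: "{x, y} \<in> F" and "x \<noteq> y" and "reachable (F - {{x, y}}) x y"
  shows "\<exists>zs. is_cycle_list F zs \<and> x \<in> set zs"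
proof -
  let ?G = "F - {{x, y}}"
  obtain ps where "rtrancl_path (adj ?G) x ps y" using assms(3) rtranclp_eq_rtrancl_path by metis
  then obtain ps' where p: "rtrancl_path (adj ?G) x ps' y" and d: "distinct (x # ps')"
    using rtrancl_path_distinct by metis
  have st: "\<forall>i < length ps'. adj ?G ((x # ps') ! i) (ps' ! i)" and la: "last (x # ps') = y"
    using rtrancl_path_nth[OF p] by auto
  have "ps' \<noteq> []" using la assms(2) by auto
  moreover have "ps' \<noteq> [y]"
  proof
    assume "ps' = [y]" then have "adj ?G x y" using st by auto
    then show False by (simp add: adj_def)
  qed
  ultimately have len: "length ps' \<ge> 2"
    using la by (cases ps'; cases "tl ps'"; auto)
  let ?zs = "x # ps'"
  have "{?zs ! i, ?zs ! ((i + 1) mod length ?zs)} \<in> F" if i: "i < length ?zs" for i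
  proof (cases "i + 1 < length ?zs")
    case True
    then have "adj ?G (?zs ! i) (ps' ! i)" using st by simp
    then show ?thesis using True by (simp add: adj_def)
  next
    case False
    then have "i = length ps'" using i by simp
    then have "?zs ! i = y" and "(i + 1) mod length ?zs = 0"
      using la \<open>ps' \<noteq> []\<close> by (simp_all add: last_conv_nth)
    then show ?thesis using e by (simp add: insert_commute)
  qed
  then have "is_cycle_list F ?zs" using d len by (simp add: is_cycle_list_def)
  then show ?thesis by auto
qed

text \<open>If f lies on a second cycle but not on the first, rerouting e through the first cycle
  leaves the ends of f connected without e and f, giving a cycle that avoids e.\<close>

lemma cycle_edges_subset_if_common_edge:
  assumes common: "\<And>ys. is_cycle_list F ys \<Longrightarrow> e \<in> cycle_edges ys"
    and c1: "is_cycle_list F ys\<^sub>1" and c2: "is_cycle_list F ys\<^sub>2"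
  shows "cycle_edges ys\<^sub>2 \<subseteq> cycle_edges ys\<^sub>1"
proof
  fix f assume f: "f \<in> cycle_edges ys\<^sub>2"
  show "f \<in> cycle_edges ys\<^sub>1"
  proof (rule ccontr)
    assume nf: "f \<notin> cycle_edges ys\<^sub>1"
    obtain p q where fpq: "f = {p, q}" and "p \<noteq> q"
      using cycle_edge_doubleton[OF c2 f] by blast
    have e1: "e \<in> cycle_edges ys\<^sub>1" using common c1 by blast
    then obtain x y where exy: "e = {x, y}" by (auto simp: cycle_edges_def)
    have "f \<noteq> e" using nf e1 by auto
    have "cycle_edges ys\<^sub>2 - {f} \<subseteq> F - {f}" using cycle_edges_subset[OF c2] by blast
    with cycle_edge_reachable[OF c2] f fpq have pq: "reachable (F - {f}) p q"
      by (metis reachable_mono)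
    have "cycle_edges ys\<^sub>1 - {e} \<subseteq> F - {f} - {e}"
      using cycle_edges_subset[OF c1] nf by blast
    with cycle_edge_reachable[OF c1] e1 exy have "reachable (F - {f} - {{x, y}}) x y"
      by (metis reachable_mono)
    from reachable_delete_non_bridge[OF pq this] have "reachable (F - {f} - {e}) p q"
      using exy by simp
    moreover have "F - {f} - {e} = F - {e} - {f}" by blast
    ultimately have "reachable (F - {e} - {f}) p q" by simp
    then obtain zs where zs: "is_cycle_list (F - {e}) zs"
      using cycle_through_edge[of p q "F - {e}"] f cycle_edges_subset[OF c2] \<open>f \<noteq> e\<close> fpq \<open>p \<noteq> q\<close>
      by auto
    have "cycle_edges zs \<subseteq> F" using cycle_edges_subset[OF zs] by blast
    then have "e \<in> cycle_edges zs" using common is_cycle_list_mono[OF zs] by blast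
    then show False using cycle_edges_subset[OF zs] by auto
  qed
qed

section \<open>Unicyclic graphs and 2-switches\<close>

lemma simple_graph_edge: "simple_graph V E \<Longrightarrow> {x, y} \<in> E \<Longrightarrow> x \<in> V \<and> y \<in> V \<and> x \<noteq> y"
  unfolding simple_graph_def by (metis doubleton_eq_iff)

lemma degree_one_pendant:
  assumes "simple_graph V E" and "degree V E l = 1" and "{l, u} \<in> E"
  shows "\<forall>x. {l, x} \<in> E \<longrightarrow> x = u"
proof (intro allI impI)
  fix x assume "{l, x} \<in> E"
  have "card {w \<in> V. {l, w} \<in> E} = 1" using assms(2) by (simp add: degree_def)
  then obtain z where "{w \<in> V. {l, w} \<in> E} = {z}" by (rule card_1_singletonE)
  moreover have "u \<in> {w \<in> V. {l, w} \<in> E}" and "x \<in> {w \<in> V. {l, w} \<in> E}"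
    using simple_graph_edge[OF assms(1) assms(3)] simple_graph_edge[OF assms(1) \<open>{l, x} \<in> E\<close>]
      assms(3) \<open>{l, x} \<in> E\<close> by auto
  ultimately show "x = u" by simp
qed

lemma unicyclic_has_cycle:
  assumes "unicyclic V E"
  obtains xs where "is_cycle_list E xs"
  using assms unfolding unicyclic_def graph_cycles_def by blast

lemma unicyclic_cycle_edges_eq:
  assumes "unicyclic V E" and "is_cycle_list E xs" and "is_cycle_list E ys"
  shows "cycle_edges ys = cycle_edges xs"
proof -
  have "cycle_edges xs \<in> graph_cycles E" "cycle_edges ys \<in> graph_cycles E"
    using assms(2,3) by (auto simp: graph_cycles_def)
  then show ?thesis using assms(1) unfolding unicyclic_def by blast
qed

lemma unicyclicI:
  assumes "simple_graph V E" and "connected_graph V E" and "is_cycle_list E xs"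
    and "\<And>ys. is_cycle_list E ys \<Longrightarrow> cycle_edges ys = cycle_edges xs"
  shows "unicyclic V E"
proof -
  have "\<exists>!C. C \<in> graph_cycles E"
  proof
    show "cycle_edges xs \<in> graph_cycles E" using assms(3) by (auto simp: graph_cycles_def)
  next
    fix C assume "C \<in> graph_cycles E"
    then show "C = cycle_edges xs" using assms(4) by (auto simp: graph_cycles_def)
  qed
  then show ?thesis using assms(1,2) by (simp add: unicyclic_def)
qed

lemma two_switch_eq:
  "interchangeable E a b c d \<Longrightarrow> two_switch E a b c d = E - {{a, b}, {c, d}} \<union> {{a, c}, {b, d}}"
  by (simp add: two_switch_def)

lemma simple_graph_two_switch:
  assumes "simple_graph V E" and "interchangeable E a b c d"
  shows "simple_graph V (two_switch E a b c d)"
proof -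
  have "a \<in> V" "b \<in> V" "c \<in> V" "d \<in> V" "a \<noteq> c" "b \<noteq> d"
    using assms simple_graph_edge by (fastforce simp: interchangeable_def)+
  then show ?thesis using assms by (auto simp: two_switch_eq simple_graph_def)
qed

text \<open>The new edges ac and bd join the ends of the deleted edges ab and cd to c and b,
  so a single walk from c to b restores both.\<close>

lemma connected_graph_two_switch:
  assumes "connected_graph V E" and "interchangeable E a b c d"
    and "reachable (two_switch E a b c d) c b"
  shows "connected_graph V (two_switch E a b c d)"
proof (rule connected_graph_if_edges_reachable[OF assms(1)])
  let ?F = "two_switch E a b c d"
  have ac: "adj ?F a c" and bd: "adj ?F b d"
    using assms(2) by (auto simp: two_switch_eq adj_def)
  fix x y assume "{x, y} \<in> E"
  then consider "{x, y} = {a, b}" | "{x, y} = {c, d}" | "{x, y} \<in> ?F"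
    using assms(2) by (auto simp: two_switch_eq)
  then show "reachable ?F x y"
  proof cases
    case 1
    have "reachable ?F a b" using ac assms(3) by (rule converse_rtranclp_into_rtranclp)
    with 1 show ?thesis by (metis reachable_doubleton)
  next
    case 2
    have "reachable ?F c d" using assms(3) bd by (rule rtranclp.rtrancl_into_rtrancl)
    with 2 show ?thesis by (metis reachable_doubleton)
  next
    case 3 then show ?thesis by (rule reachable_edge)
  qed
qed

lemma u_switchI:
  assumes "unicyclic V E" and "interchangeable E a b c d"
    and "reachable (two_switch E a b c d) c b"
    and "is_cycle_list (two_switch E a b c d) zs"
    and "\<And>ys. is_cycle_list (two_switch E a b c d) ys \<Longrightarrow> cycle_edges ys = cycle_edges zs"
  shows "u_switch V E a b c d"
proof -
  have "simple_graph V E" and "connected_graph V E" using assms(1) by (auto simp: unicyclic_def)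
  then have "unicyclic V (two_switch E a b c d)"
    by (intro unicyclicI[OF _ _ assms(4,5)] simple_graph_two_switch connected_graph_two_switch
        assms(2,3))
  then show ?thesis using assms(2) by (simp add: u_switch_def)
qed

section \<open>Moving a pendant vertex\<close>

lemma interchangeable_pendant_edge:
  assumes pendant: "\<forall>x. {l, x} \<in> E \<longrightarrow> x = u" and "{l, u} \<in> E" and "{v, w} \<in> E"
    and "{u, w} \<notin> E" and "l \<noteq> v" and "u \<noteq> v" and "u \<noteq> w"
  shows "interchangeable E l u v w"
proof -
  have "{l, v} \<notin> E" using pendant \<open>u \<noteq> v\<close> by blast
  moreover have "l \<noteq> w" using pendant \<open>{v, w} \<in> E\<close> \<open>u \<noteq> v\<close> by (metis insert_commute)
  ultimately show ?thesis using assms(2-7) by (auto simp: interchangeable_def)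
qed

text \<open>After the switch the pendant vertex l hangs off v, so no cycle passes through l.\<close>

lemma cycle_edges_pendant_switch:
  assumes pendant: "\<forall>x. {l, x} \<in> E \<longrightarrow> x = u" and "l \<noteq> u"
    and sw: "interchangeable E l u v w" and ys: "is_cycle_list (two_switch E l u v w) ys"
  shows "cycle_edges ys - {{u, w}} \<subseteq> E - {{l, u}, {v, w}}"
proof -
  let ?F = "two_switch E l u v w"
  have "\<forall>x. {l, x} \<in> ?F \<longrightarrow> x = v"
    using pendant sw \<open>l \<noteq> u\<close> by (auto simp: two_switch_eq interchangeable_def doubleton_eq_iff)
  then have "l \<notin> set ys" using ys by (rule pendant_not_on_cycle)
  then have "{l, v} \<notin> cycle_edges ys" using cycle_edge_vertex[of "{l, v}" ys l] by blast
  then show ?thesis using cycle_edges_subset[OF ys] sw by (auto simp: two_switch_eq)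
qed

lemma unique_cycle_after_switching_cycle_edge:
  assumes U: "unicyclic V E" and pendant: "\<forall>x. {l, x} \<in> E \<longrightarrow> x = u" and "l \<noteq> u"
    and sw: "interchangeable E l u v w"
    and xs: "is_cycle_list E xs" and vw: "{v, w} \<in> cycle_edges xs"
    and zs: "is_cycle_list (two_switch E l u v w) zs"
    and ys: "is_cycle_list (two_switch E l u v w) ys"
  shows "cycle_edges ys = cycle_edges zs"
proof -
  have common: "{u, w} \<in> cycle_edges ys'" if ys': "is_cycle_list (two_switch E l u v w) ys'" for ys'
  proof (rule ccontr)
    assume "{u, w} \<notin> cycle_edges ys'"
    then have sub: "cycle_edges ys' \<subseteq> E - {{l, u}, {v, w}}"
      using cycle_edges_pendant_switch[OF pendant \<open>l \<noteq> u\<close> sw ys'] by (simp add: Diff_insert0)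
    then have "is_cycle_list E ys'" using is_cycle_list_mono[OF ys', of E] by blast
    then have "cycle_edges ys' = cycle_edges xs" using unicyclic_cycle_edges_eq[OF U xs] by blast
    then show False using vw sub by blast
  qed
  show ?thesis
    using cycle_edges_subset_if_common_edge[OF common zs ys]
      cycle_edges_subset_if_common_edge[OF common ys zs] by (rule subset_antisym)
qed

text \<open>A new cycle through u w would give a walk from v via u to w avoiding the bridge v w.\<close>

lemma unique_cycle_after_switching_bridge:
  assumes U: "unicyclic V E" and pendant: "\<forall>x. {l, x} \<in> E \<longrightarrow> x = u" and "l \<noteq> u"
    and sw: "interchangeable E l u v w"
    and bridge: "\<not> reachable (E - {{v, w}}) v w" and vu: "reachable (E - {{v, w}}) v u"
    and xs: "is_cycle_list E xs" and ys: "is_cycle_list (two_switch E l u v w) ys"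
  shows "cycle_edges ys = cycle_edges xs"
proof (cases "{u, w} \<in> cycle_edges ys")
  case True
  have "cycle_edges ys - {{u, w}} \<subseteq> E - {{v, w}}"
    using cycle_edges_pendant_switch[OF pendant \<open>l \<noteq> u\<close> sw ys] by blast
  with cycle_edge_reachable[OF ys True] have "reachable (E - {{v, w}}) u w"
    by (rule reachable_mono)
  then show ?thesis using bridge vu by (meson rtranclp_trans)
next
  case False
  then have "cycle_edges ys \<subseteq> E"
    using cycle_edges_pendant_switch[OF pendant \<open>l \<noteq> u\<close> sw ys] by blast
  then show ?thesis using unicyclic_cycle_edges_eq[OF U xs] is_cycle_list_mono[OF ys, of E] by blast
qed

lemma degree_two_neighbours:
  assumes "simple_graph V E" and "degree V E v \<ge> 2"
  obtains w\<^sub>1 w\<^sub>2 where "w\<^sub>1 \<noteq> w\<^sub>2" and "{v, w\<^sub>1} \<in> E" and "{v, w\<^sub>2} \<in> E"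
proof -
  have "finite {w \<in> V. {v, w} \<in> E}" using assms(1) by (simp add: simple_graph_def)
  moreover have "\<not> card {w \<in> V. {v, w} \<in> E} \<le> Suc 0" using assms(2) by (simp add: degree_def)
  ultimately show ?thesis using that by (auto simp: card_le_Suc0_iff_eq)
qed

text \<open>If u were adjacent to both cycle neighbours a, b of v, the walk u b v a would close a
  cycle through u.\<close>

lemma cycle_neighbour_nonadjacent:
  assumes xs: "is_cycle_list E xs" and "v \<in> set xs" and uc: "u \<notin> cycle_vertices E"
  shows "\<exists>w. {v, w} \<in> cycle_edges xs \<and> {u, w} \<notin> E"
proof (rule ccontr)
  assume "\<not> ?thesis"
  obtain a b where "a \<noteq> b" and va: "{v, a} \<in> cycle_edges xs" and vb: "{v, b} \<in> cycle_edges xs"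
    using cycle_vertex_two_neighbours[OF xs \<open>v \<in> set xs\<close>] by blast
  with \<open>\<not> ?thesis\<close> have ua: "{u, a} \<in> E" and ub: "{u, b} \<in> E" by blast+
  have "u \<notin> set xs" using xs uc by (auto simp: cycle_vertices_def)
  moreover have "a \<in> set xs" "b \<in> set xs"
    using cycle_edge_vertex[OF va, of a] cycle_edge_vertex[OF vb, of b] by simp_all
  ultimately have "u \<noteq> a" and "{u, a} \<notin> {{u, b}, {v, b}, {v, a}}"
    using \<open>a \<noteq> b\<close> \<open>v \<in> set xs\<close> by (auto simp: doubleton_eq_iff)
  moreover have "{v, a} \<in> E" "{v, b} \<in> E" using va vb cycle_edges_subset[OF xs] by blast+
  ultimately have "adj (E - {{u, a}}) u b" "adj (E - {{u, a}}) b v" "adj (E - {{u, a}}) v a"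
    using ub by (auto simp: adj_def insert_commute)
  then have "reachable (E - {{u, a}}) u a"
    by (meson converse_rtranclp_into_rtranclp r_into_rtranclp)
  then show False
    using cycle_through_edge[OF ua \<open>u \<noteq> a\<close>] uc by (auto simp: cycle_vertices_def)
qed

text \<open>The new cycle: a walk from u to v avoiding l u and v w, continued along the old cycle
  to w and closed by u w.\<close>

lemma u_switch_to_cycle_vertex:
  assumes U: "unicyclic V E" and lu: "{l, u} \<in> E" and dl: "degree V E l = 1"
    and uc: "u \<notin> cycle_vertices E" and vc: "v \<in> cycle_vertices E"
  shows "\<exists>a b c d. u_switch V E a b c d \<and> {l, v} \<in> two_switch E a b c d"
proof -
  have sg: "simple_graph V E" and conn: "connected_graph V E" using U by (auto simp: unicyclic_def)
  have pendant: "\<forall>x. {l, x} \<in> E \<longrightarrow> x = u" using degree_one_pendant[OF sg dl lu] .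
  obtain xs where xs: "is_cycle_list E xs" "v \<in> set xs" using vc by (auto simp: cycle_vertices_def)
  obtain w where vw: "{v, w} \<in> cycle_edges xs" and uw: "{u, w} \<notin> E"
    using cycle_neighbour_nonadjacent[OF xs uc] by blast
  have "l \<notin> set xs" using pendant_not_on_cycle[OF pendant xs(1)] .
  have "u \<notin> set xs" using xs(1) uc by (auto simp: cycle_vertices_def)
  have "w \<in> set xs" using cycle_edge_vertex[OF vw, of w] by simp
  have vw_E: "{v, w} \<in> E" using vw cycle_edges_subset[OF xs(1)] by blast
  have "u \<in> V" "l \<noteq> u" "v \<in> V"
    using simple_graph_edge[OF sg lu] simple_graph_edge[OF sg vw_E] by auto
  have "l \<noteq> v" "u \<noteq> v" "u \<noteq> w"
    using \<open>l \<notin> set xs\<close> \<open>u \<notin> set xs\<close> \<open>w \<in> set xs\<close> xs(2) by auto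
  then have sw: "interchangeable E l u v w"
    using interchangeable_pendant_edge[OF pendant lu vw_E uw] by blast
  let ?F = "two_switch E l u v w" and ?G = "E - {{l, u}} - {{v, w}}"
  have "{l, u} \<notin> cycle_edges xs"
    using cycle_edge_vertex[of "{l, u}" xs l] \<open>l \<notin> set xs\<close> by blast
  then have "cycle_edges xs - {{v, w}} \<subseteq> ?G" using cycle_edges_subset[OF xs(1)] by blast
  with cycle_edge_reachable[OF xs(1) vw] have vw_G: "reachable ?G v w" by (rule reachable_mono)
  have "reachable (E - {{l, u}}) u v"
    using reachable_delete_pendant_edge[OF pendant] conn \<open>u \<in> V\<close> \<open>v \<in> V\<close> \<open>l \<noteq> u\<close> \<open>l \<noteq> v\<close>
    by (simp add: connected_graph_def)
  then have uv_G: "reachable ?G u v" using vw_G by (rule reachable_delete_non_bridge)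
  have G_F: "?G \<subseteq> ?F - {{u, w}}" using sw uw by (auto simp: two_switch_eq)
  have "reachable ?G u w" using uv_G vw_G by (rule rtranclp_trans)
  with G_F have "reachable (?F - {{u, w}}) u w" by (rule reachable_mono[rotated])
  then obtain zs where zs: "is_cycle_list ?F zs"
    using cycle_through_edge[of u w ?F] \<open>u \<noteq> w\<close> sw by (auto simp: two_switch_eq)
  have "cycle_edges ys = cycle_edges zs" if "is_cycle_list ?F ys" for ys
    using unique_cycle_after_switching_cycle_edge[OF U pendant \<open>l \<noteq> u\<close> sw xs(1) vw zs that] .
  moreover have "reachable ?F v u"
    using reachable_sym[OF reachable_mono[OF uv_G]] G_F by blast
  ultimately have "u_switch V E l u v w" using u_switchI[OF U sw _ zs] by blast
  moreover have "{l, v} \<in> ?F" using sw by (simp add: two_switch_eq)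
  ultimately show ?thesis by blast
qed

lemma u_switch_to_tree_vertex:
  assumes U: "unicyclic V E" and lu: "{l, u} \<in> E" and dl: "degree V E l = 1"
    and uc: "u \<notin> cycle_vertices E" and "v \<in> V" and vc: "v \<notin> cycle_vertices E"
    and "v \<noteq> u" and dv: "degree V E v \<ge> 2"
  shows "\<exists>a b c d. u_switch V E a b c d \<and> {l, v} \<in> two_switch E a b c d"
proof -
  have sg: "simple_graph V E" and conn: "connected_graph V E" using U by (auto simp: unicyclic_def)
  have pendant: "\<forall>x. {l, x} \<in> E \<longrightarrow> x = u" using degree_one_pendant[OF sg dl lu] .
  have "u \<in> V" "l \<noteq> u" using simple_graph_edge[OF sg lu] by auto
  then have "reachable E v u" using conn \<open>v \<in> V\<close> by (simp add: connected_graph_def)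
  obtain w\<^sub>1 w\<^sub>2 where "w\<^sub>1 \<noteq> w\<^sub>2" "{v, w\<^sub>1} \<in> E" "{v, w\<^sub>2} \<in> E"
    using degree_two_neighbours[OF sg dv] .
  then obtain w where vw: "{v, w} \<in> E" and vu_E: "reachable (E - {{v, w}}) v u"
    using reachable_delete_one_of_two_edges[OF \<open>reachable E v u\<close> \<open>v \<noteq> u\<close>] by blast
  have "v \<noteq> w" using simple_graph_edge[OF sg vw] by simp
  have bridge: "\<not> reachable (E - {{v, w}}) v w"
    using cycle_through_edge[OF vw \<open>v \<noteq> w\<close>] vc by (auto simp: cycle_vertices_def)
  have "u \<noteq> w" using bridge vu_E by blast
  have uw: "{u, w} \<notin> E"
  proof
    assume "{u, w} \<in> E"
    then have "reachable (E - {{v, w}}) u w"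
      using \<open>v \<noteq> u\<close> by (auto simp: doubleton_eq_iff intro: reachable_edge)
    then show False using bridge vu_E by (meson rtranclp_trans)
  qed
  have "l \<noteq> v" using dl dv by auto
  then have sw: "interchangeable E l u v w"
    using interchangeable_pendant_edge[OF pendant lu vw uw] \<open>v \<noteq> u\<close> \<open>u \<noteq> w\<close> by blast
  let ?F = "two_switch E l u v w"
  have "reachable (E - {{v, w}} - {{l, u}}) v u"
    using reachable_delete_pendant_edge[OF _ vu_E] pendant \<open>l \<noteq> v\<close> \<open>l \<noteq> u\<close> by blast
  then have vu_F: "reachable ?F v u" by (rule reachable_mono) (auto simp: sw two_switch_eq)
  obtain xs\<^sub>0 where xs\<^sub>0: "is_cycle_list E xs\<^sub>0" using U by (rule unicyclic_has_cycle)
  have "u \<notin> set xs\<^sub>0" "v \<notin> set xs\<^sub>0" using xs\<^sub>0 uc vc by (auto simp: cycle_vertices_def)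
  then have "{l, u} \<notin> cycle_edges xs\<^sub>0" "{v, w} \<notin> cycle_edges xs\<^sub>0"
    using cycle_edge_vertex[of "{l, u}" xs\<^sub>0 u] cycle_edge_vertex[of "{v, w}" xs\<^sub>0 v] by blast+
  then have "cycle_edges xs\<^sub>0 \<subseteq> ?F"
    using cycle_edges_subset[OF xs\<^sub>0] sw by (auto simp: two_switch_eq)
  then have xs\<^sub>0_F: "is_cycle_list ?F xs\<^sub>0" using xs\<^sub>0 by (rule is_cycle_list_mono[rotated])
  have "cycle_edges ys = cycle_edges xs\<^sub>0" if "is_cycle_list ?F ys" for ys
    using unique_cycle_after_switching_bridge[OF U pendant \<open>l \<noteq> u\<close> sw bridge vu_E xs\<^sub>0 that] .
  then have "u_switch V E l u v w" using u_switchI[OF U sw vu_F xs\<^sub>0_F] by blast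
  moreover have "{l, v} \<in> ?F" using sw by (simp add: two_switch_eq)
  ultimately show ?thesis by blast
qed

theorem lemma3p1:
  fixes V :: "'a set" and E :: "'a set set" and l u v :: 'a
  assumes "unicyclic V E"
    and "{l, u} \<in> E"
    and "degree V E l = 1"
    and "u \<notin> cycle_vertices E"
  shows "(v \<in> cycle_vertices E \<longrightarrow>
            (\<exists>a b c d. u_switch V E a b c d \<and> {l, v} \<in> two_switch E a b c d))
       \<and> (v \<in> V \<and> v \<notin> cycle_vertices E \<and> v \<noteq> u \<and> degree V E v \<ge> 2 \<longrightarrow>
            (\<exists>a b c d. u_switch V E a b c d \<and> {l, v} \<in> two_switch E a b c d))"
  using u_switch_to_cycle_vertex[OF assms] u_switch_to_tree_vertex[OF assms] by blast

end
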